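(* Let $(R,\mathfrak{m})$ be a one-dimensional Cohen–Macaulay local ring, let $J$ be a regular ideal with a principal reduction $(x)$, and let $I=\operatorname{tr}(J)$. Consider the conditions: (1) $I\cong I^2$; (2) $I=(x):_R J$; (3) $I\cong(x):_R J$; (4) $I\cong J^*$. Then (1) implies (2), and (2), (3), (4) are equivalent.
   Context: $J^*=\operatorname{Hom}_R(J,R)$ and $\operatorname{tr}(J)$ is the image of $J\otimes_R J^*\to R$, $a\otimes\alpha\mapsto\alpha(a)$. An ideal is regular if it contains a nonzerodivisor. A principal reduction of $J$ is a principal ideal $(x)\subseteq J$ with $xJ^n=J^{n+1}$ for some $n$. *)

theory Defs
  imports Main "HOL-Library.Extended_Nat"
begin

definition is_ideal :: "'a::comm_ring_1 set \<Rightarrow> bool" where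
  "is_ideal I \<longleftrightarrow> 0 \<in> I \<and> (\<forall>a\<in>I. \<forall>b\<in>I. a + b \<in> I) \<and> (\<forall>r. \<forall>a\<in>I. r * a \<in> I)"

definition ideal_gen :: "'a::comm_ring_1 set \<Rightarrow> 'a set" where
  "ideal_gen S = \<Inter>{I. is_ideal I \<and> S \<subseteq> I}"

definition principal :: "'a::comm_ring_1 \<Rightarrow> 'a set" where
  "principal x = {x * s | s. True}"

definition ideal_mult :: "'a::comm_ring_1 set \<Rightarrow> 'a set \<Rightarrow> 'a set" where
  "ideal_mult I K = ideal_gen {a * b | a b. a \<in> I \<and> b \<in> K}"

primrec ideal_pow :: "'a::comm_ring_1 set \<Rightarrow> nat \<Rightarrow> 'a set" where
  "ideal_pow I 0 = UNIV"
| "ideal_pow I (Suc n) = ideal_mult I (ideal_pow I n)"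

definition colon :: "'a::comm_ring_1 set \<Rightarrow> 'a set \<Rightarrow> 'a set" where
  "colon I K = {r. \<forall>a\<in>K. r * a \<in> I}"

definition prime_ideal :: "'a::comm_ring_1 set \<Rightarrow> bool" where
  "prime_ideal P \<longleftrightarrow> is_ideal P \<and> P \<noteq> UNIV \<and> (\<forall>a b. a * b \<in> P \<longrightarrow> a \<in> P \<or> b \<in> P)"

definition maximal_ideal :: "'a::comm_ring_1 set \<Rightarrow> bool" where
  "maximal_ideal M \<longleftrightarrow> is_ideal M \<and> M \<noteq> UNIV \<and>
     (\<forall>K. is_ideal K \<longrightarrow> M \<subseteq> K \<longrightarrow> K = M \<or> K = UNIV)"

definition local_ring :: "'a::comm_ring_1 itself \<Rightarrow> bool" where
  "local_ring _ \<longleftrightarrow> (\<exists>!M::'a set. maximal_ideal M)"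

definition max_ideal :: "'a::comm_ring_1 set" where
  "max_ideal = (THE M. maximal_ideal M)"

definition noetherian_ring :: "'a::comm_ring_1 itself \<Rightarrow> bool" where
  "noetherian_ring _ \<longleftrightarrow> (\<forall>I::'a set. is_ideal I \<longrightarrow> (\<exists>F. finite F \<and> I = ideal_gen F))"

definition prime_chain :: "nat \<Rightarrow> (nat \<Rightarrow> 'a::comm_ring_1 set) \<Rightarrow> bool" where
  "prime_chain n c \<longleftrightarrow> (\<forall>i\<le>n. prime_ideal (c i)) \<and> (\<forall>i<n. c i \<subset> c (Suc i))"

definition krull_dim :: "'a::comm_ring_1 itself \<Rightarrow> enat" where
  "krull_dim _ = Sup {enat n | n. \<exists>c::nat \<Rightarrow> 'a set. prime_chain n c}"

definition regular_sequence :: "'a::comm_ring_1 list \<Rightarrow> bool" where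
  "regular_sequence xs \<longleftrightarrow>
     (\<forall>i<length xs. \<forall>y. xs ! i * y \<in> ideal_gen (set (take i xs)) \<longrightarrow> y \<in> ideal_gen (set (take i xs)))
     \<and> ideal_gen (set xs) \<noteq> UNIV"

definition depth :: "'a::comm_ring_1 itself \<Rightarrow> enat" where
  "depth _ = Sup {enat (length xs) | xs::'a list. set xs \<subseteq> max_ideal \<and> regular_sequence xs}"

definition cohen_macaulay_local :: "'a::comm_ring_1 itself \<Rightarrow> bool" where
  "cohen_macaulay_local T \<longleftrightarrow> noetherian_ring T \<and> local_ring T \<and> depth T = krull_dim T"

definition nonzerodivisor :: "'a::comm_ring_1 \<Rightarrow> bool" where
  "nonzerodivisor a \<longleftrightarrow> (\<forall>y. a * y = 0 \<longrightarrow> y = 0)"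

definition regular_ideal :: "'a::comm_ring_1 set \<Rightarrow> bool" where
  "regular_ideal J \<longleftrightarrow> (\<exists>a\<in>J. nonzerodivisor a)"

definition principal_reduction :: "'a::comm_ring_1 \<Rightarrow> 'a set \<Rightarrow> bool" where
  "principal_reduction x J \<longleftrightarrow> x \<in> J \<and>
     (\<exists>n. ideal_mult (principal x) (ideal_pow J n) = ideal_pow J (Suc n))"

definition dual :: "'a::comm_ring_1 set \<Rightarrow> ('a \<Rightarrow> 'a) set" where
  "dual J = {\<alpha>. (\<forall>a\<in>J. \<forall>b\<in>J. \<alpha> (a + b) = \<alpha> a + \<alpha> b) \<and> (\<forall>r. \<forall>a\<in>J. \<alpha> (r * a) = r * \<alpha> a)
               \<and> (\<forall>y. y \<notin> J \<longrightarrow> \<alpha> y = 0)}"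

text \<open>tr(J): image of J \<otimes> J* \<rightarrow> R, i.e. the ideal generated by all \<alpha>(a).\<close>
definition trace_ideal :: "'a::comm_ring_1 set \<Rightarrow> 'a set" where
  "trace_ideal J = ideal_gen {\<alpha> a | \<alpha> a. \<alpha> \<in> dual J \<and> a \<in> J}"

definition ideal_iso :: "'a::comm_ring_1 set \<Rightarrow> 'a set \<Rightarrow> bool" where
  "ideal_iso I K \<longleftrightarrow> (\<exists>f. bij_betw f I K \<and> (\<forall>a\<in>I. \<forall>b\<in>I. f (a + b) = f a + f b)
                          \<and> (\<forall>r. \<forall>a\<in>I. f (r * a) = r * f a))"

definition ideal_iso_dual :: "'a::comm_ring_1 set \<Rightarrow> 'a set \<Rightarrow> bool" where
  "ideal_iso_dual I J \<longleftrightarrow> (\<exists>f. bij_betw f I (dual J)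
       \<and> (\<forall>a\<in>I. \<forall>b\<in>I. f (a + b) = (\<lambda>y. f a y + f b y))
       \<and> (\<forall>r. \<forall>a\<in>I. f (r * a) = (\<lambda>y. r * f a y)))"

end

theory Submission
  imports Defs
begin

(*
  Write K = (x) :_R J. The reduction equation makes x a nonzerodivisor, and then
  k \<mapsto> (a \<mapsto> k a / x) is an isomorphism K \<cong> J*, so (3) and (4) are equivalent; evaluating
  at x shows K \<subseteq> I, and J K = x I.

  An isomorphism f : I \<cong> N of ideals with x \<in> I is multiplication by f(x)/x, so w I = x N for
  the nonzerodivisor w = f(x). Under (1) this gives J (K I) = x I^2 = w I; under (3) it gives
  J (w I) = x J K = x^2 I. An equation J (L I) = v I with v a nonzerodivisor iterates to
  J^m (L^m I) = v^m I, and comparing m = n + 1 with m = n via J^(n+1) = x J^n yields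
  v^n J I = v^n x I, hence J I = x I, i.e. I \<subseteq> K.
*)

lemma is_ideal_ideal_gen: "is_ideal (ideal_gen S)"
  unfolding ideal_gen_def is_ideal_def by auto

lemma ideal_gen_subset: "S \<subseteq> ideal_gen S"
  unfolding ideal_gen_def by auto

lemma ideal_gen_least: "is_ideal T \<Longrightarrow> S \<subseteq> T \<Longrightarrow> ideal_gen S \<subseteq> T"
  unfolding ideal_gen_def by auto

lemma is_ideal_UNIV: "is_ideal (UNIV :: 'a::comm_ring_1 set)"
  unfolding is_ideal_def by auto

lemma is_ideal_vimage_mult:
  assumes "is_ideal T" shows "is_ideal {z. c * z \<in> T}"
  using assms unfolding is_ideal_def by (auto simp: distrib_left mult.left_commute)

lemma is_ideal_colon: "is_ideal A \<Longrightarrow> is_ideal (colon A K)"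
  unfolding is_ideal_def colon_def by (auto simp: distrib_right mult.assoc)

lemma is_ideal_ideal_mult: "is_ideal (ideal_mult A B)"
  unfolding ideal_mult_def by (rule is_ideal_ideal_gen)

lemma is_ideal_trace_ideal: "is_ideal (trace_ideal J)"
  unfolding trace_ideal_def by (rule is_ideal_ideal_gen)

lemma mult_mem_ideal_mult: "a \<in> A \<Longrightarrow> b \<in> B \<Longrightarrow> a * b \<in> ideal_mult A B"
  unfolding ideal_mult_def by (rule subsetD[OF ideal_gen_subset]) blast

lemma ideal_mult_least:
  assumes "is_ideal T" "\<And>a b. a \<in> A \<Longrightarrow> b \<in> B \<Longrightarrow> a * b \<in> T"
  shows "ideal_mult A B \<subseteq> T"
  unfolding ideal_mult_def using assms by (intro ideal_gen_least) blast+

lemma ideal_mult_commute: "ideal_mult A B = ideal_mult B A"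
proof -
  have "{a * b | a b. a \<in> A \<and> b \<in> B} = {a * b | a b. a \<in> B \<and> b \<in> A}"
    by (auto, metis mult.commute, metis mult.commute)
  then show ?thesis unfolding ideal_mult_def by simp
qed

lemma ideal_mult_assoc_subset:
  "ideal_mult A (ideal_mult B C) \<subseteq> ideal_mult (ideal_mult A B) C"
proof (rule ideal_mult_least[OF is_ideal_ideal_mult])
  fix a z assume a: "a \<in> A" and z: "z \<in> ideal_mult B C"
  have "ideal_mult B C \<subseteq> {z. a * z \<in> ideal_mult (ideal_mult A B) C}"
  proof (rule ideal_mult_least[OF is_ideal_vimage_mult[OF is_ideal_ideal_mult]])
    fix b c assume "b \<in> B" "c \<in> C"
    then have "(a * b) * c \<in> ideal_mult (ideal_mult A B) C"
      using a by (intro mult_mem_ideal_mult)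
    then show "b * c \<in> {z. a * z \<in> ideal_mult (ideal_mult A B) C}"
      by (simp add: mult.assoc)
  qed
  then show "a * z \<in> ideal_mult (ideal_mult A B) C" using z by auto
qed

interpretation ideal_mult: abel_semigroup "ideal_mult :: 'a::comm_ring_1 set \<Rightarrow> _"
proof
  fix A B C :: "'a set"
  show "ideal_mult A B = ideal_mult B A" by (rule ideal_mult_commute)
  have "ideal_mult (ideal_mult A B) C = ideal_mult C (ideal_mult B A)"
    by (simp add: ideal_mult_commute)
  also have "\<dots> \<subseteq> ideal_mult A (ideal_mult B C)"
    using ideal_mult_assoc_subset[of C B A] by (simp add: ideal_mult_commute)
  finally show "ideal_mult (ideal_mult A B) C = ideal_mult A (ideal_mult B C)"
    using ideal_mult_assoc_subset[of A B C] by blast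
qed

lemmas ideal_mult_ac = ideal_mult.assoc ideal_mult.commute ideal_mult.left_commute

lemma ideal_mult_UNIV_left: "is_ideal B \<Longrightarrow> ideal_mult UNIV B = B"
  using mult_mem_ideal_mult[of 1 UNIV]
  by (intro equalityI ideal_mult_least) (auto simp: is_ideal_def)

lemma is_ideal_image_mult:
  assumes "is_ideal B" shows "is_ideal ((*) c ` B)"
  unfolding is_ideal_def
proof (intro conjI ballI allI)
  show "0 \<in> (*) c ` B" using assms by (force simp: is_ideal_def)
  fix a b assume "a \<in> (*) c ` B" "b \<in> (*) c ` B"
  then show "a + b \<in> (*) c ` B"
    using assms unfolding is_ideal_def by (auto simp: distrib_left[symmetric])
next
  fix r a assume "a \<in> (*) c ` B"
  then show "r * a \<in> (*) c ` B"
    using assms unfolding is_ideal_def by (auto simp: mult.left_commute)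
qed

lemma self_mem_principal: "c \<in> principal c"
  unfolding principal_def by (auto intro: exI[of _ 1])

lemma ideal_mult_principal:
  assumes B: "is_ideal B" shows "ideal_mult (principal c) B = (*) c ` B"
proof
  show "ideal_mult (principal c) B \<subseteq> (*) c ` B"
    using B unfolding principal_def is_ideal_def
    by (intro ideal_mult_least[OF is_ideal_image_mult[OF B]]) (auto simp: mult.assoc)
  show "(*) c ` B \<subseteq> ideal_mult (principal c) B"
    using mult_mem_ideal_mult[OF self_mem_principal] by blast
qed

lemma principal_one: "principal 1 = UNIV"
  unfolding principal_def by auto

lemma is_ideal_principal: "is_ideal (principal c)"
  using is_ideal_image_mult[OF is_ideal_UNIV] by (simp add: principal_def full_SetCompr_eq)

lemma ideal_mult_principal_principal:
  "ideal_mult (principal a) (principal b) = principal (a * b)"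
  unfolding ideal_mult_principal[OF is_ideal_principal]
  by (auto simp: principal_def mult.assoc)

lemma ideal_mult_principal_one: "is_ideal B \<Longrightarrow> ideal_mult (principal 1) B = B"
  by (simp add: principal_one ideal_mult_UNIV_left)

lemma ideal_mult_principal_subset:
  assumes "is_ideal B" shows "ideal_mult (principal c) B \<subseteq> principal c"
proof -
  have "(*) c ` B \<subseteq> principal c" unfolding principal_def by blast
  then show ?thesis by (simp add: ideal_mult_principal[OF assms])
qed

lemma nonzerodivisorI: "(\<And>y. a * y = 0 \<Longrightarrow> y = 0) \<Longrightarrow> nonzerodivisor a"
  unfolding nonzerodivisor_def by blast

lemma nonzerodivisorD: "nonzerodivisor a \<Longrightarrow> a * y = 0 \<Longrightarrow> y = 0"
  unfolding nonzerodivisor_def by blast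

lemma nonzerodivisor_mult:
  assumes "nonzerodivisor a" "nonzerodivisor b" shows "nonzerodivisor (a * b)"
proof (rule nonzerodivisorI)
  fix y assume "a * b * y = 0"
  then have "a * (b * y) = 0" by (simp only: mult.assoc)
  then show "y = 0" using assms by (blast dest: nonzerodivisorD)
qed

lemma nonzerodivisor_power: "nonzerodivisor a \<Longrightarrow> nonzerodivisor (a ^ m)"
  by (induction m) (auto intro: nonzerodivisor_mult nonzerodivisorI)

lemma nonzerodivisor_factor:
  assumes "nonzerodivisor (a * b)" shows "nonzerodivisor a"
proof (rule nonzerodivisorI)
  fix y assume "a * y = 0"
  have "a * b * y = b * (a * y)" by (simp add: mult.assoc mult.left_commute)
  also have "\<dots> = 0" using \<open>a * y = 0\<close> by simp
  finally show "y = 0" using assms by (rule nonzerodivisorD[rotated])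
qed

lemma nonzerodivisor_cancel:
  assumes "nonzerodivisor c" "c * a = c * b" shows "a = b"
proof -
  have "c * (a - b) = 0" using assms(2) by (simp add: right_diff_distrib)
  then have "a - b = 0" by (rule nonzerodivisorD[OF assms(1)])
  then show ?thesis by simp
qed

lemma ideal_mult_principal_cancel:
  assumes c: "nonzerodivisor c" and A: "is_ideal A" and B: "is_ideal B"
    and eq: "ideal_mult (principal c) A = ideal_mult (principal c) B"
  shows "A = B"
proof -
  have "inj ((*) c)" using nonzerodivisor_cancel[OF c] by (rule injI)
  then show ?thesis using eq by (simp add: ideal_mult_principal A B inj_image_eq_iff)
qed

lemma power_mem_ideal_pow: "a \<in> J \<Longrightarrow> a ^ m \<in> ideal_pow J m"
  by (induction m) (auto intro: mult_mem_ideal_mult)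

lemma is_ideal_ideal_pow: "is_ideal (ideal_pow J m)"
  by (cases m) (auto simp: is_ideal_UNIV is_ideal_ideal_mult)

lemma nonzerodivisor_if_principal_reduction:
  assumes reg: "regular_ideal J" and red: "principal_reduction x J"
  shows "nonzerodivisor x"
proof -
  obtain a where a: "a \<in> J" "nonzerodivisor a" using reg unfolding regular_ideal_def by auto
  obtain n where n: "ideal_mult (principal x) (ideal_pow J n) = ideal_pow J (Suc n)"
    using red unfolding principal_reduction_def by auto
  have "a ^ Suc n \<in> ideal_mult (principal x) (ideal_pow J n)"
    unfolding n by (rule power_mem_ideal_pow[OF a(1)])
  then obtain s where s: "a ^ Suc n = x * s"
    by (auto simp: ideal_mult_principal[OF is_ideal_ideal_pow])
  have "nonzerodivisor (x * s)" using nonzerodivisor_power[OF a(2), of "Suc n"] s by simp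
  then show ?thesis by (rule nonzerodivisor_factor)
qed

lemma ideal_mult_eq_principal_mult_if_reduction:
  assumes red: "ideal_mult (principal x) (ideal_pow J n) = ideal_pow J (Suc n)"
    and M: "is_ideal M" and v: "nonzerodivisor v"
    and eq: "ideal_mult J (ideal_mult L M) = ideal_mult (principal v) M"
  shows "ideal_mult J M = ideal_mult (principal x) M"
proof -
  have pow: "ideal_mult (ideal_pow J m) (ideal_mult (ideal_pow L m) M)
           = ideal_mult (principal (v ^ m)) M" for m
  proof (induction m)
    case 0
    show ?case using M by (simp add: ideal_mult_UNIV_left ideal_mult_principal_one)
  next
    case (Suc m)
    have "ideal_mult (ideal_pow J (Suc m)) (ideal_mult (ideal_pow L (Suc m)) M)
        = ideal_mult (ideal_pow J m) (ideal_mult (ideal_pow L m) (ideal_mult J (ideal_mult L M)))"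
      by (simp add: ideal_mult_ac)
    also have "\<dots> = ideal_mult (principal v) (ideal_mult (ideal_pow J m) (ideal_mult (ideal_pow L m) M))"
      by (simp only: eq ideal_mult.left_commute[of _ "principal v"])
    also have "\<dots> = ideal_mult (principal (v ^ Suc m)) M"
      unfolding Suc by (simp only: ideal_mult.assoc[symmetric] ideal_mult_principal_principal power_Suc)
    finally show ?case .
  qed
  have "ideal_mult (principal (v ^ n)) (ideal_mult J M)
      = ideal_mult J (ideal_mult (ideal_pow J n) (ideal_mult (ideal_pow L n) M))"
    by (simp only: pow ideal_mult.left_commute[of _ "principal (v ^ n)"])
  also have "\<dots> = ideal_mult (principal x) (ideal_mult (ideal_pow J n) (ideal_mult (ideal_pow L n) M))"
    by (simp only: ideal_mult.assoc[symmetric] red ideal_pow.simps(2)[symmetric])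
  also have "\<dots> = ideal_mult (principal (v ^ n)) (ideal_mult (principal x) M)"
    by (simp only: pow ideal_mult.left_commute[of _ "principal (v ^ n)"])
  finally show ?thesis
    by (rule ideal_mult_principal_cancel[OF nonzerodivisor_power[OF v] is_ideal_ideal_mult
          is_ideal_ideal_mult])
qed

lemma ideal_iso_imp_principal_mult_eq:
  assumes iso: "ideal_iso I N" and I: "is_ideal I" and N: "is_ideal N"
    and xI: "x \<in> I" and x: "nonzerodivisor x"
  shows "\<exists>w. nonzerodivisor w \<and> ideal_mult (principal w) I = ideal_mult (principal x) N"
proof -
  obtain f where bij: "bij_betw f I N" and lin: "\<forall>r. \<forall>a\<in>I. f (r * a) = r * f a"
    using iso unfolding ideal_iso_def by blast
  have swap: "x * f y = f x * y" if "y \<in> I" for y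
  proof -
    have "x * f y = f (x * y)" using lin that by simp
    also have "\<dots> = f (y * x)" by (simp add: mult.commute)
    also have "\<dots> = y * f x" using lin xI by blast
    finally show ?thesis by (simp add: mult.commute)
  qed
  have "nonzerodivisor (f x)"
  proof (rule nonzerodivisorI)
    fix z assume fxz: "f x * z = 0"
    have "f (z * x) = z * f x" "f (0 * x) = 0 * f x" using lin xI by blast+
    then have "f (z * x) = f (0 * x)" using fxz by (simp add: mult.commute)
    moreover have "z * x \<in> I" "0 * x \<in> I" using I xI by (auto simp: is_ideal_def)
    ultimately have "z * x = 0 * x" using inj_onD[OF bij_betw_imp_inj_on[OF bij]] by blast
    then have "x * z = 0" by (simp add: mult.commute)
    then show "z = 0" by (rule nonzerodivisorD[OF x])
  qed
  moreover have "(*) (f x) ` I = (*) x ` N"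
  proof -
    have "(*) (f x) ` I = (\<lambda>y. x * f y) ` I" using swap by (intro image_cong) auto
    also have "\<dots> = (*) x ` f ` I" by (simp add: image_image)
    also have "\<dots> = (*) x ` N" by (simp add: bij_betw_imp_surj_on[OF bij])
    finally show ?thesis .
  qed
  ultimately show ?thesis unfolding ideal_mult_principal[OF I] ideal_mult_principal[OF N] by blast
qed

lemma ideal_iso_refl: "ideal_iso I I"
  unfolding ideal_iso_def by (intro exI[of _ id]) simp

lemma self_mem_colon_principal: "x \<in> colon (principal x) J"
  unfolding colon_def principal_def by (auto simp: mult.commute)

lemma subset_colon_if_ideal_mult_subset:
  assumes "ideal_mult J I \<subseteq> A" shows "I \<subseteq> colon A J"
  unfolding colon_def
proof (intro subsetI CollectI ballI)
  fix y a assume "y \<in> I" "a \<in> J"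
  then have "a * y \<in> A" using assms by (blast intro: mult_mem_ideal_mult)
  then show "y * a \<in> A" by (simp add: mult.commute)
qed

text \<open>The isomorphism \<open>(x) :\<^sub>R J \<cong> J*\<close>, \<open>k \<mapsto> (a \<mapsto> k a / x)\<close>, for a nonzerodivisor \<open>x \<in> J\<close>.\<close>

definition colon_to_dual :: "'a::comm_ring_1 \<Rightarrow> 'a set \<Rightarrow> 'a \<Rightarrow> 'a \<Rightarrow> 'a" where
  "colon_to_dual x J k = (\<lambda>a. if a \<in> J then THE s. k * a = x * s else 0)"

lemma colon_to_dual_eqI:
  assumes x: "nonzerodivisor x" and a: "a \<in> J" and eq: "k * a = x * s"
  shows "colon_to_dual x J k a = s"
proof -
  have "t = s" if "k * a = x * t" for t
    using nonzerodivisor_cancel[OF x] that eq by simp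
  then have "(THE s. k * a = x * s) = s" using eq by (intro the_equality)
  then show ?thesis using a by (simp add: colon_to_dual_def)
qed

lemma colon_to_dual_outside: "a \<notin> J \<Longrightarrow> colon_to_dual x J k a = 0"
  by (simp add: colon_to_dual_def)

lemma mult_colon_to_dual:
  assumes x: "nonzerodivisor x" and k: "k \<in> colon (principal x) J" and a: "a \<in> J"
  shows "x * colon_to_dual x J k a = k * a"
proof -
  obtain s where "k * a = x * s" using k a unfolding colon_def principal_def by auto
  then show ?thesis using colon_to_dual_eqI[OF x a] by simp
qed

lemma colon_to_dual_add:
  assumes x: "nonzerodivisor x"
    and k: "k \<in> colon (principal x) J" and l: "l \<in> colon (principal x) J"
  shows "colon_to_dual x J (k + l) = (\<lambda>a. colon_to_dual x J k a + colon_to_dual x J l a)"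
proof
  fix a show "colon_to_dual x J (k + l) a = colon_to_dual x J k a + colon_to_dual x J l a"
    using mult_colon_to_dual[OF x k] mult_colon_to_dual[OF x l]
    by (cases "a \<in> J") (auto simp: colon_to_dual_outside distrib_left distrib_right
                             intro!: colon_to_dual_eqI[OF x])
qed

lemma colon_to_dual_scale:
  assumes x: "nonzerodivisor x" and k: "k \<in> colon (principal x) J"
  shows "colon_to_dual x J (r * k) = (\<lambda>a. r * colon_to_dual x J k a)"
proof
  fix a show "colon_to_dual x J (r * k) a = r * colon_to_dual x J k a"
    using mult_colon_to_dual[OF x k]
    by (cases "a \<in> J") (auto simp: colon_to_dual_outside mult.assoc mult.left_commute
                             intro!: colon_to_dual_eqI[OF x])
qed

lemma colon_to_dual_in_dual:
  assumes x: "nonzerodivisor x" and J: "is_ideal J" and k: "k \<in> colon (principal x) J"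
  shows "colon_to_dual x J k \<in> dual J"
proof -
  have "colon_to_dual x J k (a + b) = colon_to_dual x J k a + colon_to_dual x J k b"
    if "a \<in> J" "b \<in> J" for a b
    using that J mult_colon_to_dual[OF x k] unfolding is_ideal_def
    by (auto simp: distrib_left intro!: colon_to_dual_eqI[OF x])
  moreover have "colon_to_dual x J k (r * a) = r * colon_to_dual x J k a" if "a \<in> J" for r a
    using that J mult_colon_to_dual[OF x k] unfolding is_ideal_def
    by (auto simp: mult.left_commute intro!: colon_to_dual_eqI[OF x])
  ultimately show ?thesis by (auto simp: dual_def colon_to_dual_outside)
qed

lemma colon_to_dual_at_x:
  "nonzerodivisor x \<Longrightarrow> x \<in> J \<Longrightarrow> colon_to_dual x J k x = k"
  by (rule colon_to_dual_eqI) (auto simp: mult.commute)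

lemma dual_scale: "\<alpha> \<in> dual J \<Longrightarrow> a \<in> J \<Longrightarrow> \<alpha> (r * a) = r * \<alpha> a"
  unfolding dual_def by blast

lemma dual_outside: "\<alpha> \<in> dual J \<Longrightarrow> a \<notin> J \<Longrightarrow> \<alpha> a = 0"
  unfolding dual_def by blast

lemma dual_mult_swap:
  assumes \<alpha>: "\<alpha> \<in> dual J" and "a \<in> J" "b \<in> J"
  shows "a * \<alpha> b = b * \<alpha> a"
proof -
  have "a * \<alpha> b = \<alpha> (a * b)" using dual_scale[OF \<alpha> \<open>b \<in> J\<close>] by simp
  also have "\<dots> = \<alpha> (b * a)" by (simp add: mult.commute)
  also have "\<dots> = b * \<alpha> a" using dual_scale[OF \<alpha> \<open>a \<in> J\<close>] by simp
  finally show ?thesis .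
qed

lemma dual_at_x_in_colon:
  assumes xJ: "x \<in> J" and \<alpha>: "\<alpha> \<in> dual J"
  shows "\<alpha> x \<in> colon (principal x) J"
  unfolding colon_def
proof (intro CollectI ballI)
  fix a assume "a \<in> J"
  then have "\<alpha> x * a = x * \<alpha> a" using dual_mult_swap[OF \<alpha> xJ] by (simp add: mult.commute)
  then show "\<alpha> x * a \<in> principal x" unfolding principal_def by blast
qed

lemma colon_to_dual_at_x_inverse:
  assumes x: "nonzerodivisor x" and xJ: "x \<in> J" and \<alpha>: "\<alpha> \<in> dual J"
  shows "colon_to_dual x J (\<alpha> x) = \<alpha>"
proof
  fix a show "colon_to_dual x J (\<alpha> x) a = \<alpha> a"
  proof (cases "a \<in> J")
    case True
    have "\<alpha> x * a = x * \<alpha> a" using dual_mult_swap[OF \<alpha> xJ True] by (simp add: mult.commute)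
    then show ?thesis by (rule colon_to_dual_eqI[OF x True])
  next
    case False
    then show ?thesis by (simp add: colon_to_dual_outside dual_outside[OF \<alpha>])
  qed
qed

lemma bij_betw_colon_dual:
  assumes x: "nonzerodivisor x" and xJ: "x \<in> J" and J: "is_ideal J"
  shows "bij_betw (colon_to_dual x J) (colon (principal x) J) (dual J)"
    and "bij_betw (\<lambda>\<alpha>. \<alpha> x) (dual J) (colon (principal x) J)"
proof -
  have at_x: "\<forall>k\<in>colon (principal x) J. colon_to_dual x J k x = k"
    using colon_to_dual_at_x[OF x xJ] by blast
  have inverse: "\<forall>\<alpha>\<in>dual J. colon_to_dual x J (\<alpha> x) = \<alpha>"
    using colon_to_dual_at_x_inverse[OF x xJ] by blast
  have to_dual: "colon_to_dual x J ` colon (principal x) J \<subseteq> dual J"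
    using colon_to_dual_in_dual[OF x J] by blast
  have to_colon: "(\<lambda>\<alpha>. \<alpha> x) ` dual J \<subseteq> colon (principal x) J"
    using dual_at_x_in_colon[OF xJ] by blast
  show "bij_betw (colon_to_dual x J) (colon (principal x) J) (dual J)"
    using at_x inverse to_dual to_colon by (rule bij_betw_byWitness[where f' = "\<lambda>\<alpha>. \<alpha> x"])
  show "bij_betw (\<lambda>\<alpha>. \<alpha> x) (dual J) (colon (principal x) J)"
    using inverse at_x to_colon to_dual by (rule bij_betw_byWitness[where f' = "colon_to_dual x J"])
qed

lemma ideal_iso_colon_iff_ideal_iso_dual:
  assumes x: "nonzerodivisor x" and xJ: "x \<in> J" and J: "is_ideal J"
  shows "ideal_iso I (colon (principal x) J) \<longleftrightarrow> ideal_iso_dual I J"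
proof
  assume "ideal_iso I (colon (principal x) J)"
  then obtain f where bij: "bij_betw f I (colon (principal x) J)"
    and add: "\<forall>a\<in>I. \<forall>b\<in>I. f (a + b) = f a + f b" and lin: "\<forall>r. \<forall>a\<in>I. f (r * a) = r * f a"
    unfolding ideal_iso_def by blast
  have f_colon: "\<forall>a\<in>I. f a \<in> colon (principal x) J"
    using bij_betw_apply[OF bij] by blast
  show "ideal_iso_dual I J" unfolding ideal_iso_dual_def
  proof (intro exI conjI ballI allI)
    show "bij_betw (colon_to_dual x J \<circ> f) I (dual J)"
      by (rule bij_betw_trans[OF bij bij_betw_colon_dual(1)[OF x xJ J]])
  next
    fix a b assume "a \<in> I" "b \<in> I"
    then show "(colon_to_dual x J \<circ> f) (a + b)
             = (\<lambda>y. (colon_to_dual x J \<circ> f) a y + (colon_to_dual x J \<circ> f) b y)"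
      using add f_colon by (simp add: colon_to_dual_add[OF x])
  next
    fix r a assume "a \<in> I"
    then show "(colon_to_dual x J \<circ> f) (r * a) = (\<lambda>y. r * (colon_to_dual x J \<circ> f) a y)"
      using lin f_colon by (simp add: colon_to_dual_scale[OF x])
  qed
next
  assume "ideal_iso_dual I J"
  then obtain F where bij: "bij_betw F I (dual J)"
    and add: "\<forall>a\<in>I. \<forall>b\<in>I. F (a + b) = (\<lambda>y. F a y + F b y)"
    and lin: "\<forall>r. \<forall>a\<in>I. F (r * a) = (\<lambda>y. r * F a y)"
    unfolding ideal_iso_dual_def by blast
  show "ideal_iso I (colon (principal x) J)" unfolding ideal_iso_def
  proof (intro exI conjI ballI allI)
    show "bij_betw ((\<lambda>\<alpha>. \<alpha> x) \<circ> F) I (colon (principal x) J)"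
      by (rule bij_betw_trans[OF bij bij_betw_colon_dual(2)[OF x xJ J]])
  qed (simp_all add: add lin)
qed

lemma dual_apply_mem_trace_ideal: "\<alpha> \<in> dual J \<Longrightarrow> a \<in> J \<Longrightarrow> \<alpha> a \<in> trace_ideal J"
  unfolding trace_ideal_def by (rule subsetD[OF ideal_gen_subset]) blast

lemma colon_subset_trace_ideal:
  assumes x: "nonzerodivisor x" and xJ: "x \<in> J" and J: "is_ideal J"
  shows "colon (principal x) J \<subseteq> trace_ideal J"
proof
  fix k assume k: "k \<in> colon (principal x) J"
  have "colon_to_dual x J k x \<in> trace_ideal J"
    by (rule dual_apply_mem_trace_ideal[OF colon_to_dual_in_dual[OF x J k] xJ])
  then show "k \<in> trace_ideal J" using colon_to_dual_at_x[OF x xJ] by simp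
qed

lemma nonzerodivisor_mem_trace_ideal:
  "nonzerodivisor x \<Longrightarrow> x \<in> J \<Longrightarrow> is_ideal J \<Longrightarrow> x \<in> trace_ideal J"
  using colon_subset_trace_ideal self_mem_colon_principal by blast

lemma ideal_mult_colon_eq_trace_ideal:
  assumes x: "nonzerodivisor x" and xJ: "x \<in> J" and J: "is_ideal J"
  shows "ideal_mult J (colon (principal x) J) = ideal_mult (principal x) (trace_ideal J)"
proof
  show "ideal_mult J (colon (principal x) J) \<subseteq> ideal_mult (principal x) (trace_ideal J)"
  proof (rule ideal_mult_least[OF is_ideal_ideal_mult])
    fix a k assume a: "a \<in> J" and k: "k \<in> colon (principal x) J"
    have "colon_to_dual x J k a \<in> trace_ideal J"
      by (rule dual_apply_mem_trace_ideal[OF colon_to_dual_in_dual[OF x J k] a])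
    then have "x * colon_to_dual x J k a \<in> ideal_mult (principal x) (trace_ideal J)"
      by (rule mult_mem_ideal_mult[OF self_mem_principal])
    then show "a * k \<in> ideal_mult (principal x) (trace_ideal J)"
      by (simp add: mult_colon_to_dual[OF x k a] mult.commute)
  qed
  have "trace_ideal J \<subseteq> {y. x * y \<in> ideal_mult J (colon (principal x) J)}"
    unfolding trace_ideal_def
  proof (rule ideal_gen_least[OF is_ideal_vimage_mult[OF is_ideal_ideal_mult]], clarify)
    fix \<alpha> a assume \<alpha>: "\<alpha> \<in> dual J" and a: "a \<in> J"
    show "x * \<alpha> a \<in> ideal_mult J (colon (principal x) J)"
      using dual_mult_swap[OF \<alpha> xJ a] mult_mem_ideal_mult[OF a dual_at_x_in_colon[OF xJ \<alpha>]]
      by simp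
  qed
  then show "ideal_mult (principal x) (trace_ideal J) \<subseteq> ideal_mult J (colon (principal x) J)"
    unfolding ideal_mult_principal[OF is_ideal_trace_ideal] by blast
qed

context
  fixes J :: "'a::comm_ring_1 set" and x :: 'a and n :: nat
  assumes J: "is_ideal J" and x: "nonzerodivisor x" and xJ: "x \<in> J"
    and red: "ideal_mult (principal x) (ideal_pow J n) = ideal_pow J (Suc n)"
begin

lemma trace_ideal_eq_colon_if_ideal_mult_eq:
  assumes eq: "ideal_mult J (ideal_mult L (trace_ideal J)) = ideal_mult (principal v) (trace_ideal J)"
    and v: "nonzerodivisor v"
  shows "trace_ideal J = colon (principal x) J"
proof -
  have "ideal_mult J (trace_ideal J) = ideal_mult (principal x) (trace_ideal J)"
    by (rule ideal_mult_eq_principal_mult_if_reduction[OF red is_ideal_trace_ideal v eq])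
  then have "ideal_mult J (trace_ideal J) \<subseteq> principal x"
    using ideal_mult_principal_subset[OF is_ideal_trace_ideal] by simp
  then have "trace_ideal J \<subseteq> colon (principal x) J" by (rule subset_colon_if_ideal_mult_subset)
  with colon_subset_trace_ideal[OF x xJ J] show ?thesis by blast
qed

lemma trace_ideal_eq_colon_if_iso_square:
  assumes iso: "ideal_iso (trace_ideal J) (ideal_mult (trace_ideal J) (trace_ideal J))"
  shows "trace_ideal J = colon (principal x) J"
proof -
  obtain w where w: "nonzerodivisor w" and wI: "ideal_mult (principal w) (trace_ideal J)
      = ideal_mult (principal x) (ideal_mult (trace_ideal J) (trace_ideal J))"
    using ideal_iso_imp_principal_mult_eq[OF iso is_ideal_trace_ideal is_ideal_ideal_mult
        nonzerodivisor_mem_trace_ideal[OF x xJ J] x] by blast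
  have "ideal_mult J (ideal_mult (colon (principal x) J) (trace_ideal J))
      = ideal_mult (ideal_mult J (colon (principal x) J)) (trace_ideal J)"
    by (rule ideal_mult.assoc[symmetric])
  also have "\<dots> = ideal_mult (principal w) (trace_ideal J)"
    by (simp add: ideal_mult_colon_eq_trace_ideal[OF x xJ J] wI ideal_mult.assoc)
  finally show ?thesis using w by (rule trace_ideal_eq_colon_if_ideal_mult_eq)
qed

lemma trace_ideal_eq_colon_if_iso_colon:
  assumes iso: "ideal_iso (trace_ideal J) (colon (principal x) J)"
  shows "trace_ideal J = colon (principal x) J"
proof -
  obtain w where wI: "ideal_mult (principal w) (trace_ideal J)
      = ideal_mult (principal x) (colon (principal x) J)"
    using ideal_iso_imp_principal_mult_eq[OF iso is_ideal_trace_ideal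
        is_ideal_colon[OF is_ideal_principal] nonzerodivisor_mem_trace_ideal[OF x xJ J] x] by blast
  have "ideal_mult J (ideal_mult (principal w) (trace_ideal J))
      = ideal_mult (principal x) (ideal_mult J (colon (principal x) J))"
    by (simp add: wI ideal_mult.left_commute)
  also have "\<dots> = ideal_mult (principal (x * x)) (trace_ideal J)"
    by (simp add: ideal_mult_colon_eq_trace_ideal[OF x xJ J] ideal_mult.assoc
        ideal_mult_principal_principal[symmetric])
  finally show ?thesis using nonzerodivisor_mult[OF x x] by (rule trace_ideal_eq_colon_if_ideal_mult_eq)
qed

end

theorem proposition3p8:
  fixes J :: "'a::comm_ring_1 set" and x :: 'a and I :: "'a set"
  assumes CM: "cohen_macaulay_local TYPE('a)"
    and dim1: "krull_dim TYPE('a) = 1"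
    and J: "is_ideal J" and reg: "regular_ideal J"
    and red: "principal_reduction x J"
    and I: "I = trace_ideal J"
  shows "(ideal_iso I (ideal_mult I I) \<longrightarrow> I = colon (principal x) J)
       \<and> (I = colon (principal x) J \<longleftrightarrow> ideal_iso I (colon (principal x) J))
       \<and> (ideal_iso I (colon (principal x) J) \<longleftrightarrow> ideal_iso_dual I J)"
proof -
  have x: "nonzerodivisor x" by (rule nonzerodivisor_if_principal_reduction[OF reg red])
  have xJ: "x \<in> J" using red unfolding principal_reduction_def by simp
  obtain n where n: "ideal_mult (principal x) (ideal_pow J n) = ideal_pow J (Suc n)"
    using red unfolding principal_reduction_def by auto
  have "trace_ideal J = colon (principal x) J \<longleftrightarrow> ideal_iso (trace_ideal J) (colon (principal x) J)"
    using trace_ideal_eq_colon_if_iso_colon[OF J x xJ n] by (auto simp: ideal_iso_refl)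
  then show ?thesis
    unfolding I
    using trace_ideal_eq_colon_if_iso_square[OF J x xJ n] ideal_iso_colon_iff_ideal_iso_dual[OF x xJ J]
    by blast
qed

end
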